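(* Let $S\subseteq\mathbb{N}^k$ be a slice. There is a finite set $F\subseteq S$ such that $S=\bigcup_{\mathbf{u}\in F}(\mathbf{u}+M_{\mathbf{u}})$.
   Context: $\le$ is the componentwise order on $\mathbb{N}^k$; for $X\subseteq\mathbb{N}^k$, $\min X$ is the (finite) set of its minimal elements and $X^*$ the submonoid generated by $X$. A slice is a set $S\subseteq\mathbb{N}^k$ such that whenever $\mathbf{u},\mathbf{u}+\mathbf{v},\mathbf{u}+\mathbf{w}\in S$ for $\mathbf{u},\mathbf{v},\mathbf{w}\in\mathbb{N}^k$, then $\mathbf{u}+\mathbf{v}+\mathbf{w}\in S$. For $\mathbf{u}\in S$ let $S-\mathbf{u}=\{\mathbf{v}\in\mathbb{N}^k\mid\mathbf{u}+\mathbf{v}\in S\}$ and $M_{\mathbf{u}}=(\min((S-\mathbf{u})\setminus\{\mathbf{0}\}))^*$. *)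

theory Defs
  imports Main "HOL-Library.Function_Algebras"
begin

text \<open>Vectors in N^k are modelled as functions 'k \<Rightarrow> nat for a finite index type 'k
  (k = CARD('k)). Addition is pointwise (Function_Algebras) and the order \<le> on
  functions is the pointwise (componentwise) order from Main.\<close>

definition slice :: "('k \<Rightarrow> nat) set \<Rightarrow> bool" where
  "slice S \<longleftrightarrow> (\<forall>u v w. u \<in> S \<longrightarrow> u + v \<in> S \<longrightarrow> u + w \<in> S \<longrightarrow> u + v + w \<in> S)"

definition minimal_elems :: "('k \<Rightarrow> nat) set \<Rightarrow> ('k \<Rightarrow> nat) set" where
  "minimal_elems X = {x \<in> X. \<forall>y \<in> X. y \<le> x \<longrightarrow> y = x}"

inductive_set submonoid_gen :: "('k \<Rightarrow> nat) set \<Rightarrow> ('k \<Rightarrow> nat) set" for X where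
  zero: "0 \<in> submonoid_gen X"
| gen: "x \<in> X \<Longrightarrow> x \<in> submonoid_gen X"
| add: "a \<in> submonoid_gen X \<Longrightarrow> b \<in> submonoid_gen X \<Longrightarrow> a + b \<in> submonoid_gen X"

definition shift :: "('k \<Rightarrow> nat) set \<Rightarrow> ('k \<Rightarrow> nat) \<Rightarrow> ('k \<Rightarrow> nat) set" where
  "shift S u = {v. u + v \<in> S}"

definition M_of :: "('k \<Rightarrow> nat) set \<Rightarrow> ('k \<Rightarrow> nat) \<Rightarrow> ('k \<Rightarrow> nat) set" where
  "M_of S u = submonoid_gen (minimal_elems (shift S u - {0}))"

end

theory Submission
  imports Defs Complex_Main
begin

text \<open>For \<open>u \<in> S\<close> let \<open>U u\<close> be the upward closure of \<open>(S - u) - {0}\<close>; its minimal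
  elements generate \<open>M\<^sub>u\<close>. The slice property makes \<open>S - u\<close> closed under addition and
  monotone in \<open>u\<close>, so \<open>U\<close> is monotone on \<open>S\<close>, and by Dickson's lemma \<open>\<nat>\<^sup>k\<close> has no infinite
  strictly ascending chain of upsets, so we may induct along strict growth of \<open>U\<close>. If \<open>U\<close> is
  constant on \<open>S \<inter> [u, s]\<close>, then \<open>s\<close> is reached from \<open>u\<close> by greedy steps through the common
  generators, so \<open>s \<in> u + M\<^sub>u\<close>. Every other \<open>s \<in> S\<close> above \<open>u\<close> lies above one of the finitely
  many minimal \<open>w \<in> S\<close> above \<open>u\<close> with \<open>U u \<subset> U w\<close>, and these are covered by induction.\<close>

lemma wellorder_seq_incseq_subseq:
  fixes h :: "nat \<Rightarrow> 'a::wellorder"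
  obtains r where "strict_mono r" "incseq (h \<circ> r)"
proof -
  obtain r where r: "strict_mono r" "monoseq (h \<circ> r)"
    using seq_monosub[of h] by (auto simp: o_def)
  consider "incseq (h \<circ> r)" | "decseq (h \<circ> r)"
    using r(2) by (auto simp: monoseq_iff)
  then show thesis
  proof cases
    case 1
    with r(1) show thesis by (rule that)
  next
    case 2
    define m where "m = (LEAST y. y \<in> range (h \<circ> r))"
    have "m \<in> range (h \<circ> r)"
      unfolding m_def by (rule LeastI) (rule rangeI)
    then obtain N where "h (r N) = m" by auto
    then have N: "h (r N) \<le> h (r n)" for n
      unfolding m_def by (simp add: Least_le)
    have "h (r (n + N)) = h (r N)" for n
      using N[of "n + N"] 2 by (simp add: decseq_def antisym)
    then have "incseq (h \<circ> (r \<circ> (\<lambda>n. n + N)))"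
      by (simp add: incseq_def)
    moreover have "strict_mono (r \<circ> (\<lambda>n. n + N))"
      using r(1) by (simp add: strict_mono_def)
    ultimately show thesis by (rule that[rotated])
  qed
qed

lemma subseq_incseq_on_coordinates:
  fixes f :: "nat \<Rightarrow> 'a \<Rightarrow> 'b::wellorder"
  assumes "finite I"
  obtains r where "strict_mono r" "\<forall>x\<in>I. incseq (\<lambda>n. f (r n) x)"
  using assms
proof (induction I arbitrary: thesis rule: finite_induct)
  case empty
  show ?case by (rule empty.prems[of id]) (simp_all add: strict_mono_def)
next
  case (insert a I)
  obtain g where g: "strict_mono g" "\<forall>x\<in>I. incseq (\<lambda>n. f (g n) x)"
    using insert.IH by blast
  obtain r where r: "strict_mono r" "incseq ((\<lambda>n. f (g n) a) \<circ> r)"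
    using wellorder_seq_incseq_subseq by blast
  have "incseq (\<lambda>n. f (g (r n)) x)" if "x \<in> I" for x
    using g(2) that r(1) by (auto simp: incseq_def strict_mono_less_eq)
  with r(2) have "\<forall>x\<in>insert a I. incseq (\<lambda>n. f ((g \<circ> r) n) x)"
    by (simp add: o_def)
  moreover have "strict_mono (g \<circ> r)"
    using g(1) r(1) by (rule strict_mono_o)
  ultimately show ?case by (rule insert.prems[rotated])
qed

lemma dickson:
  fixes f :: "nat \<Rightarrow> 'a::finite \<Rightarrow> 'b::wellorder"
  obtains i j where "i < j" "f i \<le> f j"
proof -
  obtain r where r: "strict_mono r" "\<forall>x. incseq (\<lambda>n. f (r n) x)"
    using subseq_incseq_on_coordinates[where I=UNIV and f=f] by auto
  have "r 0 < r 1" "f (r 0) \<le> f (r 1)"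
    using r by (auto simp: strict_mono_def incseq_def le_fun_def)
  then show thesis by (rule that)
qed

lemma wf_less_fun: "wf {(x, y). x < (y :: 'a::finite \<Rightarrow> 'b::wellorder)}"
proof -
  have False if desc: "\<And>i. f (Suc i) < f i" for f :: "nat \<Rightarrow> 'a \<Rightarrow> 'b"
  proof -
    obtain i j where "i < j" "f i \<le> f j" using dickson .
    moreover have "f j \<le> f (Suc i)"
      using lift_Suc_antimono_le[of f "Suc i" j] desc \<open>i < j\<close> by (simp add: less_imp_le)
    ultimately show False
      using desc[of i] by (meson order.trans leD)
  qed
  then show ?thesis
    unfolding wf_iff_no_infinite_down_chain by auto
qed

lemma less_fun_induct [case_names less]:
  "(\<And>x. (\<And>y. y < x \<Longrightarrow> P y) \<Longrightarrow> P x) \<Longrightarrow> P (a :: 'a::finite \<Rightarrow> 'b::wellorder)"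
  by (rule wf_induct_rule[OF wf_less_fun]) auto

definition upclosure :: "'a::order set \<Rightarrow> 'a set" where
  "upclosure X = {x. \<exists>y\<in>X. y \<le> x}"

lemma upclosure_mono: "X \<subseteq> Y \<Longrightarrow> upclosure X \<subseteq> upclosure Y"
  unfolding upclosure_def by blast

lemma wf_upclosure_psubset:
  "wf {(Y, X). upclosure X \<subset> upclosure (Y :: ('a::finite \<Rightarrow> 'b::wellorder) set)}"
proof -
  have False if chain: "\<And>i. upclosure (X i) \<subset> upclosure (X (Suc i))"
    for X :: "nat \<Rightarrow> ('a \<Rightarrow> 'b) set"
  proof -
    have "\<forall>i. \<exists>y. y \<in> upclosure (X (Suc i)) - upclosure (X i)"
      using chain by blast
    then obtain x where x: "\<And>i. x i \<in> upclosure (X (Suc i)) - upclosure (X i)"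
      by metis
    obtain i j where "i < j" "x i \<le> x j" using dickson .
    have "upclosure (X (Suc i)) \<subseteq> upclosure (X j)"
      using lift_Suc_mono_le[of "\<lambda>i. upclosure (X i)"] chain \<open>i < j\<close> by (simp add: less_imp_le)
    with x[of i] have "x i \<in> upclosure (X j)" by blast
    with \<open>x i \<le> x j\<close> have "x j \<in> upclosure (X j)"
      unfolding upclosure_def by (auto intro: order.trans)
    with x[of j] show False by blast
  qed
  then show ?thesis
    unfolding wf_iff_no_infinite_down_chain by blast
qed

lemma upclosure_psubset_induct [case_names less]:
  fixes B :: "'c \<Rightarrow> ('a::finite \<Rightarrow> 'b::wellorder) set"
  assumes "\<And>x. (\<And>y. upclosure (B x) \<subset> upclosure (B y) \<Longrightarrow> P y) \<Longrightarrow> P x"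
  shows "P a"
  using wf_inv_image[OF wf_upclosure_psubset, of B] assms
  by (induction a rule: wf_induct_rule) auto

lemma minimal_elems_upclosure: "minimal_elems (upclosure X) = minimal_elems X"
  unfolding minimal_elems_def upclosure_def by (auto intro: order.trans)

lemma minimal_elems_subset: "minimal_elems X \<subseteq> X"
  unfolding minimal_elems_def by blast

lemma minimal_elem_below:
  fixes X :: "('k::finite \<Rightarrow> nat) set"
  assumes "x \<in> X"
  obtains m where "m \<in> minimal_elems X" "m \<le> x"
proof -
  obtain m where m: "m \<in> X" "m \<le> x" and least: "\<And>y. y < m \<Longrightarrow> \<not> (y \<in> X \<and> y \<le> x)"
    using wfE_min[OF wf_less_fun, of x "{y \<in> X. y \<le> x}"] assms by auto
  have "m \<in> minimal_elems X"
    unfolding minimal_elems_def using m least by (auto simp: order.strict_iff_order intro: order.trans)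
  then show thesis using m(2) by (rule that)
qed

lemma finite_minimal_elems: "finite (minimal_elems (X :: ('k::finite \<Rightarrow> nat) set))"
proof (rule ccontr)
  assume "infinite (minimal_elems X)"
  then obtain f :: "nat \<Rightarrow> _" where f: "inj f" "range f \<subseteq> minimal_elems X"
    using infinite_countable_subset by blast
  obtain i j where "i < j" "f i \<le> f j" using dickson .
  moreover have "f i \<in> X" "f j \<in> minimal_elems X"
    using f(2) by (auto simp: minimal_elems_def)
  ultimately have "f i = f j" by (auto simp: minimal_elems_def)
  with f(1) \<open>i < j\<close> show False by (auto dest: injD)
qed

lemma add_diff_inverse_fun:
  fixes u v :: "'a \<Rightarrow> 'b::ordered_cancel_comm_monoid_diff"
  shows "u \<le> v \<Longrightarrow> u + (v - u) = v"
  by (simp add: le_fun_def fun_eq_iff ordered_cancel_comm_monoid_diff_class.add_diff_inverse)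

lemma diff_less_fun:
  fixes p d :: "'a \<Rightarrow> nat"
  assumes "p \<le> d" "p \<noteq> 0"
  shows "d - p < d"
proof -
  obtain a where "p a \<noteq> 0"
    using assms(2) by (auto simp: fun_eq_iff)
  moreover have "p a \<le> d a"
    using assms(1) by (simp add: le_fun_def)
  ultimately have "\<not> d a \<le> d a - p a"
    by linarith
  with assms(1) show ?thesis
    by (auto simp: less_fun_def le_fun_def intro!: exI[of _ a])
qed

lemma shift_add_closed:
  assumes "slice S" "u \<in> S" "v \<in> shift S u" "w \<in> shift S u"
  shows "v + w \<in> shift S u"
  using assms unfolding slice_def shift_def by (simp add: add.assoc[symmetric])

lemma M_of_subset_shift:
  assumes "slice S" "u \<in> S"
  shows "M_of S u \<subseteq> shift S u"
proof
  fix x assume "x \<in> M_of S u"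
  then show "x \<in> shift S u"
    unfolding M_of_def
  proof (induction rule: submonoid_gen.induct)
    case zero
    show ?case using assms(2) unfolding shift_def by (metis add.right_neutral mem_Collect_eq)
  next
    case (gen x)
    then show ?case by (simp add: minimal_elems_def)
  next
    case (add a b)
    then show ?case using shift_add_closed[OF assms] by blast
  qed
qed

lemma shift_mono:
  assumes "slice S" "u \<in> S" "u' \<in> S" "u \<le> u'"
  shows "shift S u \<subseteq> shift S u'"
proof
  fix v assume "v \<in> shift S u"
  moreover have "u' - u \<in> shift S u"
    using assms(3,4) by (simp add: shift_def add_diff_inverse_fun)
  ultimately have "(u' - u) + v \<in> shift S u"
    using shift_add_closed[OF assms(1,2)] by blast
  then show "v \<in> shift S u'"
    using assms(4) by (simp add: shift_def add.assoc[symmetric] add_diff_inverse_fun)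
qed

definition translated_monoids :: "('k \<Rightarrow> nat) set \<Rightarrow> ('k \<Rightarrow> nat) set \<Rightarrow> ('k \<Rightarrow> nat) set" where
  "translated_monoids S F = (\<Union>u\<in>F. (\<lambda>v. u + v) ` M_of S u)"

definition finitely_covered :: "('k \<Rightarrow> nat) set \<Rightarrow> ('k \<Rightarrow> nat) set \<Rightarrow> bool" where
  "finitely_covered S A \<longleftrightarrow> (\<exists>F. finite F \<and> F \<subseteq> S \<and> A \<subseteq> translated_monoids S F)"

lemma finitely_covered_subset:
  "finitely_covered S B \<Longrightarrow> A \<subseteq> B \<Longrightarrow> finitely_covered S A"
  unfolding finitely_covered_def by blast

lemma translated_monoids_mono:
  "F \<subseteq> G \<Longrightarrow> translated_monoids S F \<subseteq> translated_monoids S G"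
  unfolding translated_monoids_def by blast

lemma finitely_covered_UN:
  assumes "finite I" "\<forall>i\<in>I. finitely_covered S (A i)"
  shows "finitely_covered S (\<Union>i\<in>I. A i)"
proof -
  obtain F where F: "\<And>i. i \<in> I \<Longrightarrow> finite (F i) \<and> F i \<subseteq> S \<and> A i \<subseteq> translated_monoids S (F i)"
    using assms(2) unfolding finitely_covered_def by metis
  have "A i \<subseteq> translated_monoids S (\<Union>i\<in>I. F i)" if "i \<in> I" for i
    using F[OF that] translated_monoids_mono[of "F i" "\<Union>i\<in>I. F i" S] that by blast
  then have "(\<Union>i\<in>I. A i) \<subseteq> translated_monoids S (\<Union>i\<in>I. F i)"
    by (rule UN_least)
  moreover have "finite (\<Union>i\<in>I. F i)" "(\<Union>i\<in>I. F i) \<subseteq> S"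
    using assms(1) F by auto
  ultimately show ?thesis
    unfolding finitely_covered_def by blast
qed

lemma finitely_covered_insert:
  assumes "finitely_covered S A" "u \<in> S"
  shows "finitely_covered S (A \<union> (\<lambda>v. u + v) ` M_of S u)"
proof -
  obtain F where F: "finite F" "F \<subseteq> S" "A \<subseteq> translated_monoids S F"
    using assms(1) unfolding finitely_covered_def by blast
  have "A \<union> (\<lambda>v. u + v) ` M_of S u \<subseteq> translated_monoids S (insert u F)"
    using F(3) unfolding translated_monoids_def by auto
  with F(1,2) assms(2) show ?thesis
    unfolding finitely_covered_def by blast
qed

lemma finitely_covered_above_minimal_elems:
  fixes W :: "('k::finite \<Rightarrow> nat) set"
  assumes "\<forall>w\<in>minimal_elems W. finitely_covered S {s\<in>S. w \<le> s}"
  shows "finitely_covered S {s\<in>S. \<exists>w\<in>W. w \<le> s}"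
proof (rule finitely_covered_subset)
  show "finitely_covered S (\<Union>w\<in>minimal_elems W. {s\<in>S. w \<le> s})"
    using finite_minimal_elems assms by (rule finitely_covered_UN)
  show "{s\<in>S. \<exists>w\<in>W. w \<le> s} \<subseteq> (\<Union>w\<in>minimal_elems W. {s\<in>S. w \<le> s})"
  proof clarify
    fix s w assume "s \<in> S" "w \<in> W" "w \<le> s"
    obtain m where "m \<in> minimal_elems W" "m \<le> w"
      using \<open>w \<in> W\<close> by (rule minimal_elem_below)
    with \<open>s \<in> S\<close> \<open>w \<le> s\<close> show "s \<in> (\<Union>w\<in>minimal_elems W. {s\<in>S. w \<le> s})"
      using order.trans by blast
  qed
qed

lemma mem_M_of_if_generators_const:
  fixes S :: "('k::finite \<Rightarrow> nat) set"
  assumes const: "\<forall>w\<in>S. u \<le> w \<and> w \<le> s \<longrightarrow>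
      minimal_elems (shift S w - {0}) = minimal_elems (shift S u - {0})"
    and "s \<in> S" "w \<in> S" "u \<le> w" "w + d = s"
  shows "d \<in> M_of S u"
  using assms(3-5)
proof (induction d arbitrary: w rule: less_fun_induct)
  case (less d)
  show ?case
  proof (cases "d = 0")
    case True
    show ?thesis
      unfolding True M_of_def by (rule submonoid_gen.zero)
  next
    case False
    have "d \<in> shift S w - {0}"
      using \<open>s \<in> S\<close> False unfolding shift_def less.prems(3)[symmetric] by simp
    then obtain p where p: "p \<in> minimal_elems (shift S w - {0})" "p \<le> d"
      by (rule minimal_elem_below)
    have "w \<le> s"
      using less.prems(3) by (auto simp: le_fun_def)
    with const less.prems(1,2) have "minimal_elems (shift S w - {0}) = minimal_elems (shift S u - {0})"
      by blast
    with p(1) have "p \<in> M_of S u"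
      unfolding M_of_def by (simp add: submonoid_gen.gen)
    have "w + p \<in> S" "p \<noteq> 0"
      using p(1) by (auto simp: minimal_elems_def shift_def)
    from p(2) \<open>p \<noteq> 0\<close> have "d - p < d"
      by (rule diff_less_fun)
    moreover have "u \<le> w + p"
      using less.prems(2) by (auto simp: le_fun_def intro: trans_le_add1)
    moreover have "(w + p) + (d - p) = s"
      using less.prems(3) add_diff_inverse_fun[OF p(2)] by (simp only: add.assoc)
    ultimately have "d - p \<in> M_of S u"
      using less.IH \<open>w + p \<in> S\<close> by blast
    with \<open>p \<in> M_of S u\<close> have "p + (d - p) \<in> M_of S u"
      unfolding M_of_def by (rule submonoid_gen.add)
    with p(2) show ?thesis
      by (simp add: add_diff_inverse_fun)
  qed
qed

lemma finitely_covered_above: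
  fixes S :: "('k::finite \<Rightarrow> nat) set"
  assumes "slice S" "u \<in> S"
  shows "finitely_covered S {s\<in>S. u \<le> s}"
  using assms(2)
proof (induction u rule: upclosure_psubset_induct[of "\<lambda>u. shift S u - {0}"])
  case (less u)
  let ?U = "\<lambda>u. upclosure (shift S u - {0})"
  define W where "W = {w\<in>S. u \<le> w \<and> ?U w \<noteq> ?U u}"
  have "finitely_covered S {s\<in>S. w \<le> s}" if "w \<in> W" for w
  proof -
    have "?U u \<subseteq> ?U w"
      using that shift_mono[OF assms(1) less.prems] unfolding W_def
      by (intro upclosure_mono) blast
    with that show ?thesis
      using less.IH unfolding W_def by auto
  qed
  then have "\<forall>w\<in>minimal_elems W. finitely_covered S {s\<in>S. w \<le> s}"
    using minimal_elems_subset[of W] by blast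
  then have "finitely_covered S {s\<in>S. \<exists>w\<in>W. w \<le> s}"
    by (rule finitely_covered_above_minimal_elems)
  then have covered: "finitely_covered S ({s\<in>S. \<exists>w\<in>W. w \<le> s} \<union> (\<lambda>v. u + v) ` M_of S u)"
    using less.prems by (rule finitely_covered_insert)
  have "s \<in> (\<lambda>v. u + v) ` M_of S u"
    if "s \<in> S" "u \<le> s" "\<not> (\<exists>w\<in>W. w \<le> s)" for s
  proof -
    have "minimal_elems (shift S w - {0}) = minimal_elems (shift S u - {0})"
      if "w \<in> S" "u \<le> w" "w \<le> s" for w
    proof -
      have "?U w = ?U u"
        using that \<open>\<not> (\<exists>w\<in>W. w \<le> s)\<close> unfolding W_def by blast
      then have "minimal_elems (?U w) = minimal_elems (?U u)"
        by (rule arg_cong)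
      then show ?thesis
        by (simp only: minimal_elems_upclosure)
    qed
    moreover have "u + (s - u) = s"
      using that(2) by (rule add_diff_inverse_fun)
    ultimately have "s - u \<in> M_of S u"
      using that(1) less.prems by (blast intro: mem_M_of_if_generators_const)
    with \<open>u + (s - u) = s\<close> show ?thesis
      by (metis image_eqI)
  qed
  then have "{s\<in>S. u \<le> s} \<subseteq> {s\<in>S. \<exists>w\<in>W. w \<le> s} \<union> (\<lambda>v. u + v) ` M_of S u"
    by blast
  with covered show ?case
    by (rule finitely_covered_subset)
qed

theorem lemma6:
  fixes S :: "('k::finite \<Rightarrow> nat) set"
  assumes "slice S"
  shows "\<exists>F. finite F \<and> F \<subseteq> S \<and> S = (\<Union>u\<in>F. (\<lambda>v. u + v) ` M_of S u)"
proof -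
  have "\<forall>w\<in>minimal_elems S. finitely_covered S {s\<in>S. w \<le> s}"
    using finitely_covered_above[OF assms] minimal_elems_subset[of S] by blast
  then have "finitely_covered S {s\<in>S. \<exists>w\<in>S. w \<le> s}"
    by (rule finitely_covered_above_minimal_elems)
  then obtain F where F: "finite F" "F \<subseteq> S" "S \<subseteq> translated_monoids S F"
    unfolding finitely_covered_def by auto
  moreover have "translated_monoids S F \<subseteq> S"
    using M_of_subset_shift[OF assms] F(2) by (auto simp: translated_monoids_def shift_def)
  ultimately show ?thesis
    unfolding translated_monoids_def by blast
qed

end
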